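(* Let $A_0$, $\theta$ and $\gamma$ be as follows: - $A_0$ is feasible for (GDSP) with $\mathrm{assoc}_S(A_0)>0$; - $\theta$ is the minimum of $\mathrm{pen}(A)$ over nonempty infeasible $A\subseteq V'$; - $\gamma>\dfrac{\mathrm{vol}_d(V)}{\theta}\cdot\dfrac{\mathrm{vol}_g(A_0)+\nu_S}{\mathrm{assoc}_S(A_0)}$. Then the continuous problem $$\min_{f\in\mathbb{R}^m_+\setminus\{0\}}\frac{\mathrm{vol}_g^L(f)+\nu_S\,\mathrm{unit}^L(f)+\gamma\,\mathrm{pen}^L(f)}{\mathrm{assoc}_S^L(f)}$$ (with $x/0=+\infty$ for $x>0$) attains its minimum, and this minimum equals the reciprocal of the optimal value of (GDSP). Moreover, for any minimizer $f^*$, the set among $\{j\in V':f^*_j\ge f^*_i\}$, $i=1,\dots,m$, minimizing $$\frac{\mathrm{vol}_g(A)+\nu_S\,\mathrm{unit}(A)+\gamma\,\mathrm{pen}(A)}{\mathrm{assoc}_S(A)}$$ is an optimal solution of (GDSP).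
   Context: Let $V$ be a finite vertex set with symmetric nonnegative weights $w_{ij}=w_{ji}\ge0$ and $w_{ii}=0$. - $d_i=\sum_{j\in V}w_{ij}$, and $\mathrm{vol}_h(A)=\sum_{i\in A}h_i$. - $\mathrm{assoc}(A)=\sum_{i,j\in A}w_{ij}$ (ordered pairs), and $\mathrm{cut}(A,B)=\sum_{i\in A,j\in B}w_{ij}$. - Fix $S\subseteq V$, $V'=V\setminus S$, $m=|V'|$ (identify $V'$ with $\{1,\dots,m\}$), and $d^S_i=\sum_{j\in S}w_{ij}$. - $g:V\to(0,\infty)$, $\mu_S=\mathrm{assoc}(S)$, $\nu_S=\mathrm{vol}_g(S)$. - $\mathrm{unit}(A)=1$ if $A\ne\emptyset$ and $0$ otherwise. - $\mathrm{assoc}_S(A)=\mathrm{vol}_d(A)-\mathrm{cut}(A,V'\setminus A)+\mathrm{vol}_{d^S}(A)+\mu_S\,\mathrm{unit}(A)$ for $A\subseteq V'$. Constraint data: $M_1,\dots,M_p\in[0,\infty)^V$; reals $k_j,l_j$; a symmetric $\mathrm{dist}\ge0$ with $\mathrm{dist}(u,u)=0$; and $d_0\ge0$. - $A\subseteq V'$ is feasible for (GDSP) if $A\ne\emptyset$, $k_j\le\mathrm{vol}_{M_j}(A)\le l_j$ for all $j$, and $\mathrm{dist}(u,v)\le d_0$ for all $u,v\in A$. - (GDSP) maximizes $\mathrm{assoc}_S(A)/(\mathrm{vol}_g(A)+\nu_S)$ over feasible $A$. Penalty: $\mathrm{pen}(\emptyset)=0$, and for $A\ne\emptyset$, $$\mathrm{pen}(A)=\sum_{j}\max\{0,\mathrm{vol}_{M_j}(A)-l_j\}+\sum_j\max\{0,k_j-\mathrm{vol}_{M_j}(A)\}+\sum_{u,v\in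 A}\max\{0,\mathrm{dist}(u,v)-d_0\}.$$ Lovasz extension of $F:2^{V'}\to\mathbb{R}$ with $F(\emptyset)=0$: for $f\in\mathbb{R}^m$ and a permutation $\pi$ with $f_{\pi(1)}\le\dots\le f_{\pi(m)}$, $B_i=\{\pi(i),\dots,\pi(m)\}$, $$F^L(f)=\sum_{i=1}^{m-1}F(B_{i+1})(f_{\pi(i+1)}-f_{\pi(i)})+F(V')f_{\pi(1)}.$$ *)

theory Defs
  imports Complex_Main "HOL-Library.Extended_Real"
begin

definition vol :: "('v \<Rightarrow> real) \<Rightarrow> 'v set \<Rightarrow> real" where
  "vol h A = (\<Sum>i\<in>A. h i)"

text \<open>deg w X i = sum over j in X of w i j; d = deg w V and d^S = deg w S.\<close>
definition deg :: "('v \<Rightarrow> 'v \<Rightarrow> real) \<Rightarrow> 'v set \<Rightarrow> 'v \<Rightarrow> real" where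
  "deg w X i = (\<Sum>j\<in>X. w i j)"

definition assoc :: "('v \<Rightarrow> 'v \<Rightarrow> real) \<Rightarrow> 'v set \<Rightarrow> real" where
  "assoc w A = (\<Sum>i\<in>A. \<Sum>j\<in>A. w i j)"

definition cut :: "('v \<Rightarrow> 'v \<Rightarrow> real) \<Rightarrow> 'v set \<Rightarrow> 'v set \<Rightarrow> real" where
  "cut w A B = (\<Sum>i\<in>A. \<Sum>j\<in>B. w i j)"

definition unitf :: "'v set \<Rightarrow> real" where
  "unitf A = (if A = {} then 0 else 1)"

definition assocS :: "('v \<Rightarrow> 'v \<Rightarrow> real) \<Rightarrow> 'v set \<Rightarrow> 'v set \<Rightarrow> 'v set \<Rightarrow> real" where
  "assocS w V S A = vol (deg w V) A - cut w A ((V - S) - A) + vol (deg w S) A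
      + assoc w S * unitf A"

definition feasible :: "nat \<Rightarrow> (nat \<Rightarrow> 'v \<Rightarrow> real) \<Rightarrow> (nat \<Rightarrow> real) \<Rightarrow> (nat \<Rightarrow> real)
    \<Rightarrow> ('v \<Rightarrow> 'v \<Rightarrow> real) \<Rightarrow> real \<Rightarrow> 'v set \<Rightarrow> 'v set \<Rightarrow> bool" where
  "feasible p M k l D d0 V' A \<longleftrightarrow> A \<noteq> {} \<and> A \<subseteq> V'
     \<and> (\<forall>j<p. k j \<le> vol (M j) A \<and> vol (M j) A \<le> l j)
     \<and> (\<forall>u\<in>A. \<forall>v\<in>A. D u v \<le> d0)"

definition pen :: "nat \<Rightarrow> (nat \<Rightarrow> 'v \<Rightarrow> real) \<Rightarrow> (nat \<Rightarrow> real) \<Rightarrow> (nat \<Rightarrow> real)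
    \<Rightarrow> ('v \<Rightarrow> 'v \<Rightarrow> real) \<Rightarrow> real \<Rightarrow> 'v set \<Rightarrow> real" where
  "pen p M k l D d0 A = (if A = {} then 0 else
      (\<Sum>j<p. max 0 (vol (M j) A - l j)) + (\<Sum>j<p. max 0 (k j - vol (M j) A))
      + (\<Sum>u\<in>A. \<Sum>v\<in>A. max 0 (D u v - d0)))"

text \<open>Lovasz extension w.r.t. an ordering xs = [pi(1),...,pi(m)] of the ground set U.\<close>
definition lovasz_seq :: "('v set \<Rightarrow> real) \<Rightarrow> 'v set \<Rightarrow> ('v \<Rightarrow> real) \<Rightarrow> 'v list \<Rightarrow> real" where
  "lovasz_seq F U f xs =
     (\<Sum>i<length xs - 1. F (set (drop (i + 1) xs)) * (f (xs ! (i + 1)) - f (xs ! i)))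
     + F U * f (xs ! 0)"

definition lovasz :: "('v set \<Rightarrow> real) \<Rightarrow> 'v set \<Rightarrow> ('v \<Rightarrow> real) \<Rightarrow> real" where
  "lovasz F U f = lovasz_seq F U f
     (SOME xs. distinct xs \<and> set xs = U \<and> sorted (map f xs))"

definition ediv :: "real \<Rightarrow> real \<Rightarrow> ereal" where
  "ediv x y = (if y = 0 \<and> x > 0 then PInfty else ereal (x / y))"

definition gdsp_ratio :: "('v \<Rightarrow> 'v \<Rightarrow> real) \<Rightarrow> 'v set \<Rightarrow> 'v set \<Rightarrow> ('v \<Rightarrow> real) \<Rightarrow> 'v set \<Rightarrow> real" where
  "gdsp_ratio w V S g A = assocS w V S A / (vol g A + vol g S)"

end

theory Submission
  imports Defs
begin

text \<open>Put q = 1/opt. At f \<ge> 0 the Lovasz extension of a set function F is a combination of the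
  values of F on the superlevel sets of f with nonnegative weights, and a weight can be positive
  only at a level where f is nonzero. The choice of \<gamma> makes
  vol_g(A) + \<nu> unit(A) + \<gamma> pen(A) - q assoc_S(A) nonnegative on every nonempty A \<subseteq> V', and
  zero exactly at the optimal sets of (GDSP): for infeasible A,
  \<gamma> pen(A) \<ge> \<gamma> \<theta> > q vol_d(V) \<ge> q assoc_S(A). Hence the continuous ratio is at least q, equals q
  at the indicator of an optimal set, and at a minimizer f the superlevel sets cannot all have
  penalized ratio above q, so the best of them is optimal.\<close>

lemma sorted_map_nth_mono:
  assumes "sorted (map f xs)" "i \<le> j" "j < length xs"
  shows "f (xs ! i) \<le> f (xs ! j)"
  using assms sorted_nth_mono[of "map f xs" i j] by simp

lemma set_drop_eq_superlevel:
  assumes sorted: "sorted (map f xs)" and i: "Suc i < length xs"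
    and jump: "f (xs ! i) < f (xs ! Suc i)"
  shows "set (drop (Suc i) xs) = {j \<in> set xs. f (xs ! Suc i) \<le> f j}"
proof (intro equalityI subsetI)
  fix x assume "x \<in> set (drop (Suc i) xs)"
  then obtain k where "k < length xs - Suc i" "x = xs ! (Suc i + k)"
    by (auto simp: in_set_conv_nth)
  then show "x \<in> {j \<in> set xs. f (xs ! Suc i) \<le> f j}"
    using sorted_map_nth_mono[OF sorted] by auto
next
  fix x assume x: "x \<in> {j \<in> set xs. f (xs ! Suc i) \<le> f j}"
  then obtain k where k: "k < length xs" "x = xs ! k" by (auto simp: in_set_conv_nth)
  have "Suc i \<le> k"
  proof (rule ccontr)
    assume "\<not> Suc i \<le> k"
    then have "f (xs ! k) \<le> f (xs ! i)" using sorted_map_nth_mono[OF sorted, of k i] i by simp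
    then show False using x k jump by simp
  qed
  then have "x = drop (Suc i) xs ! (k - Suc i)" "k - Suc i < length (drop (Suc i) xs)"
    using k by auto
  then show "x \<in> set (drop (Suc i) xs)" by (metis nth_mem)
qed

definition level_weight :: "('v \<Rightarrow> real) \<Rightarrow> 'v list \<Rightarrow> nat \<Rightarrow> real" where
  "level_weight f xs i = (if i = 0 then f (xs ! 0) else f (xs ! i) - f (xs ! (i - 1)))"

lemma level_weight_nonneg:
  assumes "sorted (map f xs)" "\<forall>x\<in>set xs. 0 \<le> f x" "i < length xs"
  shows "0 \<le> level_weight f xs i"
  using assms sorted_map_nth_mono[OF assms(1), of "i - 1" i] by (auto simp: level_weight_def)

lemma level_weight_pos_imp_nonzero:
  assumes "\<forall>x\<in>set xs. 0 \<le> f x" "i < length xs" "0 < level_weight f xs i"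
  shows "f (xs ! i) \<noteq> 0"
proof -
  have "0 \<le> f (xs ! (i - 1))" using assms(1,2) by simp
  then show ?thesis using assms(3) by (auto simp: level_weight_def split: if_splits)
qed

lemma sum_level_weight:
  assumes "xs \<noteq> []"
  shows "(\<Sum>i<length xs. level_weight f xs i) = f (xs ! (length xs - 1))"
proof -
  obtain n where n: "length xs = Suc n" using assms by (cases xs) auto
  have "(\<Sum>i<Suc n. level_weight f xs i)
        = f (xs ! 0) + (\<Sum>i<n. f (xs ! Suc i) - f (xs ! i))"
    unfolding sum.lessThan_Suc_shift by (simp add: level_weight_def)
  also have "\<dots> = f (xs ! n)" using sum_lessThan_telescope[of "\<lambda>i. f (xs ! i)" n] by simp
  finally show ?thesis using n by simp
qed

lemma lovasz_seq_eq_sum_superlevel: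
  assumes sorted: "sorted (map f xs)" and U: "set xs = U" and ne: "xs \<noteq> []"
  shows "lovasz_seq F U f xs
         = (\<Sum>i<length xs. F {j \<in> U. f (xs ! i) \<le> f j} * level_weight f xs i)"
proof -
  obtain n where n: "length xs = Suc n" using ne by (cases xs) auto
  have top: "{j \<in> U. f (xs ! 0) \<le> f j} = U"
    using sorted_map_nth_mono[OF sorted, of 0] U n by (auto simp: in_set_conv_nth)
  have step: "F (set (drop (Suc i) xs)) * (f (xs ! Suc i) - f (xs ! i))
              = F {j \<in> U. f (xs ! Suc i) \<le> f j} * level_weight f xs (Suc i)" if "i < n" for i
  proof (cases "f (xs ! i) < f (xs ! Suc i)")
    case True
    then show ?thesis
      using set_drop_eq_superlevel[OF sorted _ True] that n U by (simp add: level_weight_def)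
  next
    case False
    then have "f (xs ! i) = f (xs ! Suc i)"
      using sorted_map_nth_mono[OF sorted, of i "Suc i"] that n by simp
    then show ?thesis by (simp add: level_weight_def)
  qed
  have "lovasz_seq F U f xs
        = F U * f (xs ! 0) + (\<Sum>i<n. F (set (drop (Suc i) xs)) * (f (xs ! Suc i) - f (xs ! i)))"
    unfolding lovasz_seq_def n by simp
  also have "\<dots> = F U * f (xs ! 0)
      + (\<Sum>i<n. F {j \<in> U. f (xs ! Suc i) \<le> f j} * level_weight f xs (Suc i))"
    using step by simp
  finally show ?thesis
    unfolding n sum.lessThan_Suc_shift using top by (simp add: level_weight_def)
qed

lemma lovasz_eq_sum_superlevel:
  assumes "finite U" "U \<noteq> {}"
  obtains xs where "set xs = U" "sorted (map f xs)" "xs \<noteq> []"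
    "lovasz F U f = (\<Sum>i<length xs. F {j \<in> U. f (xs ! i) \<le> f j} * level_weight f xs i)"
proof -
  obtain ys where "set ys = U" "distinct ys" using finite_distinct_list[OF assms(1)] by blast
  then have "\<exists>xs. distinct xs \<and> set xs = U \<and> sorted (map f xs)"
    by (intro exI[of _ "sort_key f ys"]) simp
  then obtain xs where xs: "xs = (SOME xs. distinct xs \<and> set xs = U \<and> sorted (map f xs))"
    and set_xs: "set xs = U" and sorted_xs: "sorted (map f xs)"
    by (metis (mono_tags, lifting) someI_ex)
  have ne: "xs \<noteq> []" using set_xs assms(2) by auto
  have "lovasz F U f = (\<Sum>i<length xs. F {j \<in> U. f (xs ! i) \<le> f j} * level_weight f xs i)"
    unfolding lovasz_def xs[symmetric] by (rule lovasz_seq_eq_sum_superlevel[OF sorted_xs set_xs ne])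
  with set_xs sorted_xs ne show ?thesis by (rule that)
qed

lemma lovasz_seq_add_scaled:
  "lovasz_seq (\<lambda>A. F A + c * G A) U f xs = lovasz_seq F U f xs + c * lovasz_seq G U f xs"
  unfolding lovasz_seq_def
  by (simp add: distrib_left distrib_right sum.distrib sum_distrib_left mult.assoc)

lemma lovasz_add_scaled:
  "lovasz (\<lambda>A. F A + c * G A) U f = lovasz F U f + c * lovasz G U f"
  unfolding lovasz_def by (rule lovasz_seq_add_scaled)

lemma lovasz_nonneg:
  assumes "finite U" "U \<noteq> {}" "\<forall>i\<in>U. 0 \<le> f i"
    and F: "\<forall>i\<in>U. f i \<noteq> 0 \<longrightarrow> 0 \<le> F {j \<in> U. f i \<le> f j}"
  shows "0 \<le> lovasz F U f"
proof -
  obtain xs where xs: "set xs = U" "sorted (map f xs)" "xs \<noteq> []"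
    and L: "lovasz F U f = (\<Sum>i<length xs. F {j \<in> U. f (xs ! i) \<le> f j} * level_weight f xs i)"
    by (rule lovasz_eq_sum_superlevel[OF assms(1,2)])
  have "0 \<le> F {j \<in> U. f (xs ! i) \<le> f j} * level_weight f xs i" if "i < length xs" for i
    using level_weight_nonneg[OF xs(2), of i] level_weight_pos_imp_nonzero[of xs f i] F that xs(1)
      assms(3) by (cases "level_weight f xs i = 0") auto
  then show ?thesis unfolding L by (intro sum_nonneg) auto
qed

lemma lovasz_pos:
  assumes "finite U" "\<forall>i\<in>U. 0 \<le> f i" "\<exists>i\<in>U. f i \<noteq> 0"
    and F: "\<forall>i\<in>U. f i \<noteq> 0 \<longrightarrow> 0 < F {j \<in> U. f i \<le> f j}"
  shows "0 < lovasz F U f"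
proof -
  have "U \<noteq> {}" using assms(3) by blast
  obtain xs where xs: "set xs = U" "sorted (map f xs)" "xs \<noteq> []"
    and L: "lovasz F U f = (\<Sum>i<length xs. F {j \<in> U. f (xs ! i) \<le> f j} * level_weight f xs i)"
    by (rule lovasz_eq_sum_superlevel[OF assms(1) \<open>U \<noteq> {}\<close>])
  let ?w = "level_weight f xs"
  have f_nonneg: "\<forall>x\<in>set xs. 0 \<le> f x" using xs(1) assms(2) by simp
  have term_pos: "0 < F {j \<in> U. f (xs ! i) \<le> f j} * ?w i" if "i < length xs" "0 < ?w i" for i
    using level_weight_pos_imp_nonzero[OF f_nonneg that] F that xs(1) by auto
  have term_nonneg: "0 \<le> F {j \<in> U. f (xs ! i) \<le> f j} * ?w i" if "i < length xs" for i
    using level_weight_nonneg[OF xs(2) f_nonneg that] term_pos[OF that]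
    by (cases "?w i = 0") auto
  \<comment> \<open>The weights add up to the maximum of f, which is positive, so one of them is positive.\<close>
  obtain k where k: "k < length xs" "0 < f (xs ! k)"
    using assms(2,3) xs(1) by (metis in_set_conv_nth less_eq_real_def)
  have "f (xs ! k) \<le> f (xs ! (length xs - 1))"
    by (rule sorted_map_nth_mono[OF xs(2)]) (use k in auto)
  then have "0 < (\<Sum>i<length xs. ?w i)" using sum_level_weight[OF xs(3)] k by simp
  then obtain i where i: "i < length xs" "0 < ?w i"
    using sum_nonpos[of "{..<length xs}" ?w] by (meson lessThan_iff not_le)
  show ?thesis
    unfolding L using term_nonneg term_pos[OF i] i(1) by (intro sum_pos2[of _ i]) auto
qed

lemma lovasz_indicator:
  assumes "finite U" "A \<noteq> {}" "A \<subseteq> U"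
  shows "lovasz F U (\<lambda>j. if j \<in> A then 1 else 0) = F A"
proof -
  define f :: "'a \<Rightarrow> real" where "f = (\<lambda>j. if j \<in> A then 1 else 0)"
  have "U \<noteq> {}" using assms(2,3) by blast
  obtain xs where xs: "set xs = U" "sorted (map f xs)" "xs \<noteq> []"
    and L: "lovasz F U f = (\<Sum>i<length xs. F {j \<in> U. f (xs ! i) \<le> f j} * level_weight f xs i)"
    by (rule lovasz_eq_sum_superlevel[OF assms(1) \<open>U \<noteq> {}\<close>])
  have f_nonneg: "\<forall>x\<in>set xs. 0 \<le> f x" by (simp add: f_def)
  have "F {j \<in> U. f (xs ! i) \<le> f j} * level_weight f xs i = F A * level_weight f xs i"
    if "i < length xs" for i
  proof (cases "level_weight f xs i = 0")
    case False
    then have "f (xs ! i) \<noteq> 0"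
      using level_weight_pos_imp_nonzero[OF f_nonneg that]
        level_weight_nonneg[OF xs(2) f_nonneg that] by simp
    then have "{j \<in> U. f (xs ! i) \<le> f j} = A" using assms(3) by (auto simp: f_def)
    then show ?thesis by simp
  qed simp
  then have "lovasz F U f = F A * f (xs ! (length xs - 1))"
    unfolding L sum_level_weight[OF xs(3), symmetric] sum_distrib_left
    by (intro sum.cong) auto
  moreover have "f (xs ! (length xs - 1)) = 1"
  proof -
    obtain a where "a \<in> A" using assms(2) by blast
    then have "a \<in> set xs" using assms(3) xs(1) by blast
    then obtain k where "k < length xs" "xs ! k = a" by (auto simp: in_set_conv_nth)
    then have "f (xs ! k) \<le> f (xs ! (length xs - 1))"
      by (intro sorted_map_nth_mono[OF xs(2)]) auto
    then show ?thesis using \<open>a \<in> A\<close> \<open>xs ! k = a\<close> by (auto simp: f_def split: if_splits)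
  qed
  ultimately show ?thesis by (simp add: f_def)
qed

lemma ereal_le_ediv_iff:
  assumes "0 < x" "0 \<le> y"
  shows "ereal q \<le> ediv x y \<longleftrightarrow> q * y \<le> x"
  using assms by (cases "y = 0") (auto simp: ediv_def pos_le_divide_eq)

lemma ereal_less_ediv_iff:
  assumes "0 < x" "0 \<le> y"
  shows "ereal q < ediv x y \<longleftrightarrow> q * y < x"
  using assms by (cases "y = 0") (auto simp: ediv_def pos_less_divide_eq)

lemma lovasz_ratio_ge:
  assumes U: "finite U" and f: "\<forall>i\<in>U. 0 \<le> f i" "\<exists>i\<in>U. f i \<noteq> 0"
    and N: "\<And>A. A \<noteq> {} \<Longrightarrow> A \<subseteq> U \<Longrightarrow> 0 < N A"
    and Dn: "\<And>A. A \<noteq> {} \<Longrightarrow> A \<subseteq> U \<Longrightarrow> 0 \<le> Dn A"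
    and q: "\<And>A. A \<noteq> {} \<Longrightarrow> A \<subseteq> U \<Longrightarrow> ereal q \<le> ediv (N A) (Dn A)"
  shows "ereal q \<le> ediv (lovasz N U f) (lovasz Dn U f)"
proof -
  have "U \<noteq> {}" using f(2) by blast
  have level: "{j \<in> U. f i \<le> f j} \<noteq> {}" "{j \<in> U. f i \<le> f j} \<subseteq> U" if "i \<in> U" for i
    using that by auto
  have "0 \<le> lovasz (\<lambda>A. N A + (- q) * Dn A) U f"
    using N Dn q level ereal_le_ediv_iff by (intro lovasz_nonneg[OF U \<open>U \<noteq> {}\<close> f(1)]) fastforce
  moreover have "0 < lovasz N U f" using N level by (intro lovasz_pos[OF U f]) auto
  moreover have "0 \<le> lovasz Dn U f"
    using Dn level by (intro lovasz_nonneg[OF U \<open>U \<noteq> {}\<close> f(1)]) auto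
  ultimately show ?thesis unfolding lovasz_add_scaled by (simp add: ereal_le_ediv_iff)
qed

lemma lovasz_ratio_gt:
  assumes U: "finite U" and f: "\<forall>i\<in>U. 0 \<le> f i" "\<exists>i\<in>U. f i \<noteq> 0"
    and N: "\<And>A. A \<noteq> {} \<Longrightarrow> A \<subseteq> U \<Longrightarrow> 0 < N A"
    and Dn: "\<And>A. A \<noteq> {} \<Longrightarrow> A \<subseteq> U \<Longrightarrow> 0 \<le> Dn A"
    and q: "\<forall>i\<in>U. ereal q < ediv (N {j \<in> U. f i \<le> f j}) (Dn {j \<in> U. f i \<le> f j})"
  shows "ereal q < ediv (lovasz N U f) (lovasz Dn U f)"
proof -
  have "U \<noteq> {}" using f(2) by blast
  have level: "{j \<in> U. f i \<le> f j} \<noteq> {}" "{j \<in> U. f i \<le> f j} \<subseteq> U" if "i \<in> U" for i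
    using that by auto
  have "0 < lovasz (\<lambda>A. N A + (- q) * Dn A) U f"
    using N Dn q level ereal_less_ediv_iff by (intro lovasz_pos[OF U f]) fastforce
  moreover have "0 < lovasz N U f" using N level by (intro lovasz_pos[OF U f]) auto
  moreover have "0 \<le> lovasz Dn U f"
    using Dn level by (intro lovasz_nonneg[OF U \<open>U \<noteq> {}\<close> f(1)]) auto
  ultimately show ?thesis unfolding lovasz_add_scaled by (simp add: ereal_less_ediv_iff)
qed

lemma assocS_eq_assoc_union:
  assumes V: "finite V" and S: "S \<subseteq> V" and A: "A \<subseteq> V - S" "A \<noteq> {}"
    and w_sym: "\<forall>i\<in>V. \<forall>j\<in>V. w i j = w j i"
  shows "assocS w V S A = assoc w (A \<union> S)"
proof -
  have fin: "finite A" "finite S" "finite (V - S - A)" using V S A by (auto intro: finite_subset)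
  have disj: "A \<inter> S = {}" using A by blast
  have V_split: "V = (A \<union> (V - S - A)) \<union> S" using A S by blast
  have deg_V: "deg w V i = deg w A i + deg w (V - S - A) i + deg w S i" for i
  proof -
    have "deg w V i = deg w (A \<union> (V - S - A)) i + deg w S i"
      unfolding deg_def arg_cong[OF V_split, of "sum (w i)"]
      by (rule sum.union_disjoint) (use fin disj in auto)
    also have "deg w (A \<union> (V - S - A)) i = deg w A i + deg w (V - S - A) i"
      unfolding deg_def by (rule sum.union_disjoint) (use fin in auto)
    finally show ?thesis .
  qed
  have "(\<Sum>i\<in>S. \<Sum>j\<in>A. w i j) = (\<Sum>i\<in>A. \<Sum>j\<in>S. w i j)"
    using w_sym A S by (subst sum.swap) (auto intro!: sum.cong)
  then have "assoc w (A \<union> S)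
      = (\<Sum>i\<in>A. deg w A i) + 2 * (\<Sum>i\<in>A. deg w S i) + assoc w S"
    unfolding assoc_def deg_def using fin disj by (simp add: sum.union_disjoint sum.distrib)
  then show ?thesis
    unfolding assocS_def vol_def cut_def unitf_def deg_V using A(2)
    by (simp add: sum.distrib deg_def)
qed

lemma assoc_bounds:
  assumes V: "finite V" and X: "X \<subseteq> V" and w_nonneg: "\<forall>i\<in>V. \<forall>j\<in>V. 0 \<le> w i j"
  shows "0 \<le> assoc w X" "assoc w X \<le> vol (deg w V) V"
proof -
  show "0 \<le> assoc w X" unfolding assoc_def using X w_nonneg by (intro sum_nonneg) auto
  have "assoc w X \<le> (\<Sum>i\<in>X. \<Sum>j\<in>V. w i j)"
    unfolding assoc_def using V X w_nonneg
    by (intro sum_mono sum_mono2) (auto intro: finite_subset)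
  also have "\<dots> \<le> (\<Sum>i\<in>V. \<Sum>j\<in>V. w i j)"
    using V X w_nonneg by (intro sum_mono2 sum_nonneg) auto
  finally show "assoc w X \<le> vol (deg w V) V" unfolding vol_def deg_def .
qed

lemma pen_eq_0_if_feasible:
  assumes "feasible p M k l D d0 U A"
  shows "pen p M k l D d0 A = 0"
  using assms unfolding feasible_def pen_def by (auto intro!: sum.neutral)

lemma pen_pos_if_infeasible:
  assumes "finite A" "A \<noteq> {}" "A \<subseteq> U" "\<not> feasible p M k l D d0 U A"
  shows "0 < pen p M k l D d0 A"
proof -
  define s1 where "s1 = (\<Sum>j<p. max 0 (vol (M j) A - l j))"
  define s2 where "s2 = (\<Sum>j<p. max 0 (k j - vol (M j) A))"
  define s3 where "s3 = (\<Sum>u\<in>A. \<Sum>v\<in>A. max 0 (D u v - d0))"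
  have "0 \<le> s1" "0 \<le> s2" "0 \<le> s3" unfolding s1_def s2_def s3_def by (auto intro!: sum_nonneg)
  moreover have "0 < s1 \<or> 0 < s2 \<or> 0 < s3"
  proof -
    consider (upper) j where "j < p" "l j < vol (M j) A" | (lower) j where "j < p" "vol (M j) A < k j"
      | (dist) u v where "u \<in> A" "v \<in> A" "d0 < D u v"
      using assms(2-4) unfolding feasible_def by (auto simp: not_le)
    then show ?thesis
    proof cases
      case upper then show ?thesis unfolding s1_def by (intro disjI1 sum_pos2[of _ j]) auto
    next
      case lower then show ?thesis unfolding s2_def by (intro disjI2 disjI1 sum_pos2[of _ j]) auto
    next
      case dist
      have "0 < (\<Sum>v\<in>A. max 0 (D u v - d0))"
        using dist assms(1) by (intro sum_pos2[of _ v]) auto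
      then have "0 < s3"
        unfolding s3_def using dist assms(1) by (auto intro!: sum_pos2[of A u] sum_nonneg)
      then show ?thesis by blast
    qed
  qed
  ultimately show ?thesis using assms(2) unfolding pen_def s1_def s2_def s3_def by auto
qed

locale gdsp =
  fixes V S :: "'v set" and w :: "'v \<Rightarrow> 'v \<Rightarrow> real" and g :: "'v \<Rightarrow> real"
    and p :: nat and M :: "nat \<Rightarrow> 'v \<Rightarrow> real" and k l :: "nat \<Rightarrow> real"
    and D :: "'v \<Rightarrow> 'v \<Rightarrow> real" and d0 \<theta> \<gamma> :: real and A0 :: "'v set"
  assumes finite_V: "finite V" and S_subset_V: "S \<subseteq> V"
    and w_sym: "\<forall>i\<in>V. \<forall>j\<in>V. w i j = w j i" and w_nonneg: "\<forall>i\<in>V. \<forall>j\<in>V. w i j \<ge> 0"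
    and g_pos: "\<forall>i\<in>V. g i > 0"
    and A0_feasible: "feasible p M k l D d0 (V - S) A0"
    and assocS_A0_pos: "assocS w V S A0 > 0"
    and theta_eq: "\<theta> = Min {pen p M k l D d0 A | A. A \<subseteq> V - S \<and> A \<noteq> {}
                                  \<and> \<not> feasible p M k l D d0 (V - S) A}"
    and gamma_gt: "\<gamma> > vol (deg w V) V / \<theta> * ((vol g A0 + vol g S) / assocS w V S A0)"
begin

abbreviation feas :: "'v set \<Rightarrow> bool" where
  "feas \<equiv> feasible p M k l D d0 (V - S)"

definition opt :: real where
  "opt = Max (gdsp_ratio w V S g ` {A. feas A})"

definition penalized_vol :: "'v set \<Rightarrow> real" where
  "penalized_vol A = vol g A + vol g S * unitf A + \<gamma> * pen p M k l D d0 A"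

definition penalized_ratio :: "'v set \<Rightarrow> ereal" where
  "penalized_ratio A = ediv (penalized_vol A) (assocS w V S A)"

definition relaxed_ratio :: "('v \<Rightarrow> real) \<Rightarrow> ereal" where
  "relaxed_ratio f = ediv (lovasz penalized_vol (V - S) f) (lovasz (assocS w V S) (V - S) f)"

definition admissible :: "('v \<Rightarrow> real) set" where
  "admissible = {f. (\<forall>i\<in>V - S. 0 \<le> f i) \<and> (\<exists>i\<in>V - S. f i \<noteq> 0)}"

lemma feasible_nonempty_subset: "feas A \<Longrightarrow> A \<noteq> {} \<and> A \<subseteq> V - S"
  unfolding feasible_def by blast

lemma vol_g_pos: "A \<noteq> {} \<Longrightarrow> A \<subseteq> V \<Longrightarrow> 0 < vol g A"
  unfolding vol_def using g_pos finite_V by (intro sum_pos) (auto intro: finite_subset)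

lemma vol_g_S_nonneg: "0 \<le> vol g S"
  unfolding vol_def using g_pos S_subset_V by (intro sum_nonneg) (auto intro: less_imp_le)

lemma gdsp_denominator_pos:
  assumes "A \<noteq> {}" "A \<subseteq> V - S"
  shows "0 < vol g A + vol g S"
proof -
  have "0 < vol g A" using assms by (intro vol_g_pos) auto
  then show ?thesis using vol_g_S_nonneg by linarith
qed

lemma assocS_bounds:
  assumes "A \<noteq> {}" "A \<subseteq> V - S"
  shows "0 \<le> assocS w V S A" "assocS w V S A \<le> vol (deg w V) V"
proof -
  have "A \<union> S \<subseteq> V" using assms(2) S_subset_V by blast
  then show "0 \<le> assocS w V S A" "assocS w V S A \<le> vol (deg w V) V"
    unfolding assocS_eq_assoc_union[OF finite_V S_subset_V assms(2,1) w_sym]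
    by (simp_all add: assoc_bounds[OF finite_V _ w_nonneg])
qed

lemma finite_feasible_sets: "finite {A. feas A}"
proof (rule finite_subset)
  show "{A. feas A} \<subseteq> Pow V" using feasible_nonempty_subset by blast
qed (use finite_V in simp)

lemma gdsp_ratio_le_opt: "feas A \<Longrightarrow> gdsp_ratio w V S g A \<le> opt"
  unfolding opt_def using finite_feasible_sets by simp

lemma opt_attained:
  obtains A where "feas A" "gdsp_ratio w V S g A = opt"
proof -
  have "opt \<in> gdsp_ratio w V S g ` {A. feas A}"
    unfolding opt_def using finite_feasible_sets A0_feasible by (intro Max_in) auto
  then show ?thesis using that by auto
qed

lemma gdsp_ratio_A0_pos: "0 < gdsp_ratio w V S g A0"
  unfolding gdsp_ratio_def using assocS_A0_pos feasible_nonempty_subset[OF A0_feasible]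
  by (intro divide_pos_pos gdsp_denominator_pos) auto

lemma opt_pos: "0 < opt"
  using gdsp_ratio_A0_pos gdsp_ratio_le_opt[OF A0_feasible] by linarith

lemma penalized_vol_feasible: "feas A \<Longrightarrow> penalized_vol A = vol g A + vol g S"
  unfolding penalized_vol_def unitf_def
  using pen_eq_0_if_feasible[of p M k l D d0 "V - S" A] feasible_nonempty_subset by auto

lemma theta_pos_le_pen:
  assumes "A \<noteq> {}" "A \<subseteq> V - S" "\<not> feas A"
  shows "0 < \<theta>" "\<theta> \<le> pen p M k l D d0 A"
proof -
  define P where "P = {pen p M k l D d0 A | A. A \<subseteq> V - S \<and> A \<noteq> {} \<and> \<not> feas A}"
  have "P \<subseteq> pen p M k l D d0 ` Pow V" unfolding P_def by blast
  then have "finite P" using finite_V by (simp add: finite_subset)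
  moreover have "pen p M k l D d0 A \<in> P" unfolding P_def using assms by blast
  moreover have "\<forall>x\<in>P. 0 < x"
  proof
    fix x assume "x \<in> P"
    then obtain B where B: "x = pen p M k l D d0 B" "B \<noteq> {}" "B \<subseteq> V - S" "\<not> feas B"
      unfolding P_def by blast
    moreover have "finite B" using B(3) finite_V by (simp add: finite_subset)
    ultimately show "0 < x" using pen_pos_if_infeasible by simp
  qed
  ultimately have "Min P \<in> P" "Min P \<le> pen p M k l D d0 A" "\<forall>x\<in>P. 0 < x"
    by (auto intro: Min_in)
  then show "0 < \<theta>" "\<theta> \<le> pen p M k l D d0 A"
    unfolding theta_eq P_def[symmetric] by auto
qed

lemma infeasible_penalized_vol_dominates:
  assumes A: "A \<noteq> {}" "A \<subseteq> V - S" "\<not> feas A"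
  shows "assocS w V S A / opt < penalized_vol A"
proof -
  define X where "X = vol (deg w V) V"
  have r0: "(vol g A0 + vol g S) / assocS w V S A0 = 1 / gdsp_ratio w V S g A0"
    unfolding gdsp_ratio_def by simp
  have opt_inv: "1 / opt \<le> 1 / gdsp_ratio w V S g A0"
    using gdsp_ratio_A0_pos gdsp_ratio_le_opt[OF A0_feasible] by (intro divide_left_mono) auto
  have X_nonneg: "0 \<le> X" using assocS_bounds[OF A(1,2)]
    unfolding X_def by linarith
  have \<theta>: "0 < \<theta>" "\<theta> \<le> pen p M k l D d0 A" using theta_pos_le_pen[OF A] by auto
  have "assocS w V S A / opt \<le> X / opt"
    using assocS_bounds(2)[OF A(1,2)] opt_pos unfolding X_def by (simp add: divide_right_mono)
  also have "\<dots> \<le> X * (1 / gdsp_ratio w V S g A0)"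
    using mult_left_mono[OF opt_inv X_nonneg] by simp
  also have "\<dots> = (X / \<theta> * (1 / gdsp_ratio w V S g A0)) * \<theta>" using \<theta>(1) by simp
  also have "\<dots> < \<gamma> * \<theta>"
    using gamma_gt \<theta>(1) unfolding r0 X_def by (intro mult_strict_right_mono)
  also have "\<dots> \<le> \<gamma> * pen p M k l D d0 A"
  proof -
    have "0 \<le> X / \<theta> * (1 / gdsp_ratio w V S g A0)"
      using X_nonneg \<theta>(1) gdsp_ratio_A0_pos by simp
    then have "0 < \<gamma>" using gamma_gt unfolding r0 X_def by linarith
    then show ?thesis using \<theta>(2) by simp
  qed
  also have "\<dots> < penalized_vol A"
  proof -
    have "0 < vol g A" using A by (intro vol_g_pos) auto
    then show ?thesis using A(1) vol_g_S_nonneg unfolding penalized_vol_def unitf_def by simp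
  qed
  finally show ?thesis .
qed

lemma feasible_assocS_eq:
  assumes "feas A"
  shows "assocS w V S A = gdsp_ratio w V S g A * penalized_vol A"
proof -
  have "0 < vol g A + vol g S"
    using feasible_nonempty_subset[OF assms] by (intro gdsp_denominator_pos) auto
  then show ?thesis unfolding gdsp_ratio_def penalized_vol_feasible[OF assms] by simp
qed

lemma penalized_vol_pos:
  assumes "A \<noteq> {}" "A \<subseteq> V - S"
  shows "0 < penalized_vol A"
proof (cases "feas A")
  case True
  show ?thesis using gdsp_denominator_pos[OF assms] unfolding penalized_vol_feasible[OF True] .
next
  case False
  have "0 \<le> assocS w V S A / opt" using assocS_bounds(1)[OF assms] opt_pos by simp
  then show ?thesis using infeasible_penalized_vol_dominates[OF assms False] by linarith
qed

lemma penalized_ratio_ge: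
  assumes A: "A \<noteq> {}" "A \<subseteq> V - S"
  shows "ereal (1 / opt) \<le> penalized_ratio A"
proof -
  have "1 / opt * assocS w V S A \<le> penalized_vol A"
  proof (cases "feas A")
    case True
    have "gdsp_ratio w V S g A / opt \<le> 1" using gdsp_ratio_le_opt[OF True] opt_pos by simp
    then have "gdsp_ratio w V S g A / opt * penalized_vol A \<le> 1 * penalized_vol A"
      using penalized_vol_pos[OF A] by (intro mult_right_mono) auto
    then show ?thesis unfolding feasible_assocS_eq[OF True] by simp
  next
    case False
    then show ?thesis using infeasible_penalized_vol_dominates[OF A] by simp
  qed
  then show ?thesis
    unfolding penalized_ratio_def ereal_le_ediv_iff[OF penalized_vol_pos[OF A] assocS_bounds(1)[OF A]] .
qed

lemma penalized_ratio_gt: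
  assumes A: "A \<noteq> {}" "A \<subseteq> V - S" and not_opt: "\<not> (feas A \<and> gdsp_ratio w V S g A = opt)"
  shows "ereal (1 / opt) < penalized_ratio A"
proof -
  have "1 / opt * assocS w V S A < penalized_vol A"
  proof (cases "feas A")
    case True
    then have "gdsp_ratio w V S g A / opt < 1"
      using not_opt gdsp_ratio_le_opt[OF True] opt_pos by simp
    then have "gdsp_ratio w V S g A / opt * penalized_vol A < 1 * penalized_vol A"
      using penalized_vol_pos[OF A] by (intro mult_strict_right_mono) auto
    then show ?thesis unfolding feasible_assocS_eq[OF True] by simp
  next
    case False
    then show ?thesis using infeasible_penalized_vol_dominates[OF A] by simp
  qed
  then show ?thesis
    unfolding penalized_ratio_def ereal_less_ediv_iff[OF penalized_vol_pos[OF A] assocS_bounds(1)[OF A]] .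
qed

lemma penalized_ratio_optimal:
  assumes "feas A" "gdsp_ratio w V S g A = opt"
  shows "penalized_ratio A = ereal (1 / opt)"
proof -
  have "0 < penalized_vol A" using feasible_nonempty_subset[OF assms(1)] by (intro penalized_vol_pos) auto
  then show ?thesis
    unfolding penalized_ratio_def feasible_assocS_eq[OF assms(1)] assms(2) ediv_def
    using opt_pos by simp
qed

lemma lovasz_penalized_vol:
  "lovasz (vol g) U f + vol g S * lovasz unitf U f + \<gamma> * lovasz (pen p M k l D d0) U f
   = lovasz penalized_vol U f"
  unfolding penalized_vol_def lovasz_add_scaled by simp

lemma relaxed_ratio_ge:
  assumes "f \<in> admissible"
  shows "ereal (1 / opt) \<le> relaxed_ratio f"
  unfolding relaxed_ratio_def
  using assms finite_V penalized_vol_pos assocS_bounds(1) penalized_ratio_ge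
  unfolding admissible_def penalized_ratio_def by (intro lovasz_ratio_ge) auto

lemma relaxed_ratio_gt:
  assumes "f \<in> admissible"
    and "\<forall>i\<in>V - S. ereal (1 / opt) < penalized_ratio {j \<in> V - S. f i \<le> f j}"
  shows "ereal (1 / opt) < relaxed_ratio f"
  unfolding relaxed_ratio_def
  using assms finite_V penalized_vol_pos assocS_bounds(1)
  unfolding admissible_def penalized_ratio_def by (intro lovasz_ratio_gt) auto

lemma relaxed_ratio_indicator:
  assumes "A \<noteq> {}" "A \<subseteq> V - S"
  shows "relaxed_ratio (\<lambda>j. if j \<in> A then 1 else 0) = penalized_ratio A"
  unfolding relaxed_ratio_def penalized_ratio_def
  using assms finite_V by (simp add: lovasz_indicator)

theorem relaxed_ratio_minimum:
  "\<exists>f\<in>admissible. (\<forall>h\<in>admissible. relaxed_ratio f \<le> relaxed_ratio h)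
     \<and> relaxed_ratio f = ereal (1 / opt)"
proof -
  obtain A where A: "feas A" "gdsp_ratio w V S g A = opt" by (rule opt_attained)
  let ?f = "\<lambda>j. if j \<in> A then 1 else 0 :: real"
  have ne: "A \<noteq> {}" "A \<subseteq> V - S" using feasible_nonempty_subset[OF A(1)] by auto
  have "?f \<in> admissible" unfolding admissible_def using ne by auto
  moreover have "relaxed_ratio ?f = ereal (1 / opt)"
    unfolding relaxed_ratio_indicator[OF ne] by (rule penalized_ratio_optimal[OF A])
  ultimately show ?thesis using relaxed_ratio_ge by (intro bexI[of _ ?f]) simp_all
qed

theorem optimal_level_set:
  assumes f: "f \<in> admissible" and f_min: "\<forall>h\<in>admissible. relaxed_ratio f \<le> relaxed_ratio h"
    and A: "A \<in> {{j \<in> V - S. f j \<ge> f i} | i. i \<in> V - S}"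
    and A_min: "\<forall>B\<in>{{j \<in> V - S. f j \<ge> f i} | i. i \<in> V - S}. penalized_ratio A \<le> penalized_ratio B"
  shows "feas A \<and> gdsp_ratio w V S g A = opt"
proof (rule ccontr)
  assume not_opt: "\<not> (feas A \<and> gdsp_ratio w V S g A = opt)"
  have "A \<noteq> {}" "A \<subseteq> V - S" using A by auto
  then have "ereal (1 / opt) < penalized_ratio A" using penalized_ratio_gt not_opt by blast
  then have "\<forall>i\<in>V - S. ereal (1 / opt) < penalized_ratio {j \<in> V - S. f i \<le> f j}"
    using A_min by (auto intro: order.strict_trans2)
  then have "ereal (1 / opt) < relaxed_ratio f" using relaxed_ratio_gt[OF f] by blast
  moreover have "relaxed_ratio f \<le> ereal (1 / opt)"
    using relaxed_ratio_minimum f_min by auto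
  ultimately show False by simp
qed

end

theorem mainTheorem4:
  fixes V S A0 :: "'v set" and w :: "'v \<Rightarrow> 'v \<Rightarrow> real" and g :: "'v \<Rightarrow> real"
    and p :: nat and M :: "nat \<Rightarrow> 'v \<Rightarrow> real" and k l :: "nat \<Rightarrow> real"
    and D :: "'v \<Rightarrow> 'v \<Rightarrow> real" and d0 \<theta> \<gamma> :: real
  assumes finV: "finite V" and SV: "S \<subseteq> V"
    and w_sym: "\<forall>i\<in>V. \<forall>j\<in>V. w i j = w j i" and w_nn: "\<forall>i\<in>V. \<forall>j\<in>V. w i j \<ge> 0"
    and w_diag: "\<forall>i\<in>V. w i i = 0"
    and g_pos: "\<forall>i\<in>V. g i > 0"
    and M_nn: "\<forall>j<p. \<forall>i\<in>V. M j i \<ge> 0"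
    and D_sym: "\<forall>u\<in>V. \<forall>v\<in>V. D u v = D v u" and D_nn: "\<forall>u\<in>V. \<forall>v\<in>V. D u v \<ge> 0"
    and D_diag: "\<forall>u\<in>V. D u u = 0" and d0_nn: "d0 \<ge> 0"
    and A0_feas: "feasible p M k l D d0 (V - S) A0"
    and A0_pos: "assocS w V S A0 > 0"
    and theta_def: "\<theta> = Min {pen p M k l D d0 A | A. A \<subseteq> V - S \<and> A \<noteq> {}
                                  \<and> \<not> feasible p M k l D d0 (V - S) A}"
    and gamma_gt: "\<gamma> > vol (deg w V) V / \<theta> * ((vol g A0 + vol g S) / assocS w V S A0)"
  shows "let V' = V - S; \<nu> = vol g S;
             opt = Max (gdsp_ratio w V S g ` {A. feasible p M k l D d0 V' A});
             adm = {f :: 'v \<Rightarrow> real. (\<forall>i\<in>V'. f i \<ge> 0) \<and> (\<exists>i\<in>V'. f i \<noteq> 0)};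
             R = (\<lambda>f. ediv (lovasz (vol g) V' f + \<nu> * lovasz unitf V' f
                              + \<gamma> * lovasz (pen p M k l D d0) V' f)
                           (lovasz (assocS w V S) V' f));
             Q = (\<lambda>A. ediv (vol g A + \<nu> * unitf A + \<gamma> * pen p M k l D d0 A) (assocS w V S A))
         in (\<exists>f\<in>adm. (\<forall>h\<in>adm. R f \<le> R h) \<and> R f = ereal (1 / opt))
            \<and> (\<forall>f\<in>adm. (\<forall>h\<in>adm. R f \<le> R h) \<longrightarrow>
                 (\<forall>A\<in>{{j\<in>V'. f j \<ge> f i} | i. i \<in> V'}.
                    (\<forall>B\<in>{{j\<in>V'. f j \<ge> f i} | i. i \<in> V'}. Q A \<le> Q B) \<longrightarrow>
                    feasible p M k l D d0 V' A \<and> gdsp_ratio w V S g A = opt))"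
proof -
  interpret gdsp V S w g p M k l D d0 \<theta> \<gamma> A0
    using finV SV w_sym w_nn g_pos A0_feas A0_pos theta_def gamma_gt by unfold_locales
  have R: "ediv (lovasz (vol g) (V - S) f + vol g S * lovasz unitf (V - S) f
              + \<gamma> * lovasz (pen p M k l D d0) (V - S) f) (lovasz (assocS w V S) (V - S) f)
           = relaxed_ratio f" for f
    by (simp add: relaxed_ratio_def lovasz_penalized_vol)
  have Q: "ediv (vol g A + vol g S * unitf A + \<gamma> * pen p M k l D d0 A) (assocS w V S A)
           = penalized_ratio A" for A
    by (simp add: penalized_ratio_def penalized_vol_def)
  show ?thesis
    unfolding Let_def R Q admissible_def[symmetric] opt_def[symmetric]
    by (intro conjI[OF relaxed_ratio_minimum] ballI impI) (rule optimal_level_set)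
qed

end
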